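(* For a finite list $L=[l_1,l_2,\dots,l_n]$ of nonnegative integers, let $A(L)$ denote the number of words that contain exactly $l_j$ copies of the letter $j$ for each $1\le j\le n$ (and no other letters) and avoid the pattern $123$; the empty word is counted, so $A(L)=1$ if all $l_j=0$. If $l_1+\dots+l_n\ge 1$, then $$A(L)=\sum_{\substack{1\le i\le n\\ l_i\ge 1}} A\big([\,l_1,l_2,\dots,l_{i-1},\ l_i-1,\ l_{i+1}+l_{i+2}+\dots+l_n\,]\big),$$ where for $i=n$ the last entry $l_{i+1}+\dots+l_n$ is the empty sum $0$.
   Context: A word $w_1\cdots w_m$ over the positive integers contains a pattern $p_1\cdots p_k$ if there are indices $i_1<\dots<i_k$ such that for all $r,s$: $w_{i_r}<w_{i_s}\iff p_r<p_s$ and $w_{i_r}>w_{i_s}\iff p_r>p_s$; otherwise it avoids it. In particular, containing $123$ means having three positions $i_1<i_2<i_3$ with $w_{i_1}<w_{i_2}<w_{i_3}$. *)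

theory Defs
  imports Main
begin

definition contains_pattern :: "nat list \<Rightarrow> nat list \<Rightarrow> bool" where
  "contains_pattern w p \<longleftrightarrow>
     (\<exists>idx :: nat list. length idx = length p \<and> sorted_wrt (<) idx \<and>
        (\<forall>r\<in>set idx. r < length w) \<and>
        (\<forall>r < length p. \<forall>s < length p.
            (w ! (idx ! r) < w ! (idx ! s) \<longleftrightarrow> p ! r < p ! s) \<and>
            (w ! (idx ! r) > w ! (idx ! s) \<longleftrightarrow> p ! r > p ! s)))"

definition avoids_pattern :: "nat list \<Rightarrow> nat list \<Rightarrow> bool" where
  "avoids_pattern w p \<longleftrightarrow> \<not> contains_pattern w p"

definition words_with_content :: "nat list \<Rightarrow> nat list set" where
  "words_with_content L = {w. set w \<subseteq> {1..length L} \<and>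
       (\<forall>j\<in>{1..length L}. count_list w j = L ! (j - 1))}"

definition A :: "nat list \<Rightarrow> nat" where
  "A L = card {w \<in> words_with_content L. avoids_pattern w [1,2,3]}"

end

theory Submission
  imports Defs "HOL-Combinatorics.Multiset_Permutations"
begin

text \<open>A 123-avoiding word with first letter a has the form a # u, where u avoids 123 and the
  letters of u exceeding a occur in weakly decreasing order, since an ascent among them would
  complete a 123 with a. Replacing every letter above a by a + 1 therefore loses no information:
  the large letters are recovered as the decreasing arrangement of their multiset. Nor does it create
  a 123, whose middle letter would have to be at most a and hence unchanged. Thus the words with
  first letter i + 1 correspond bijectively to the 123-avoiding words of content
  [l_1, ..., l_(i-1), l_i - 1, l_(i+1) + ... + l_n], and summing over the first letter gives the
  recurrence.\<close>

definition has_increasing_triple :: "nat list \<Rightarrow> bool" where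
  "has_increasing_triple w \<longleftrightarrow>
     (\<exists>i j k. i < j \<and> j < k \<and> k < length w \<and> w ! i < w ! j \<and> w ! j < w ! k)"

lemma contains_pattern_123_iff: "contains_pattern w [1,2,3] \<longleftrightarrow> has_increasing_triple w"
proof
  assume "contains_pattern w [1,2,3]"
  then obtain idx where len: "length idx = length [1,2,3::nat]" and sorted: "sorted_wrt (<) idx"
    and bounded: "\<forall>r\<in>set idx. r < length w"
    and order: "\<forall>r < length [1,2,3::nat]. \<forall>s < length [1,2,3::nat].
                  (w ! (idx ! r) < w ! (idx ! s) \<longleftrightarrow> [1,2,3::nat] ! r < [1,2,3] ! s)"
    unfolding contains_pattern_def by blast
  obtain i j k where idx: "idx = [i, j, k]"
    using len by (metis length_0_conv length_Suc_conv)
  show "has_increasing_triple w"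
    unfolding has_increasing_triple_def
    using sorted bounded order[rule_format, of 0 1] order[rule_format, of 1 2] idx by auto
next
  assume "has_increasing_triple w"
  then obtain i j k where "i < j" "j < k" "k < length w" "w ! i < w ! j" "w ! j < w ! k"
    unfolding has_increasing_triple_def by blast
  then show "contains_pattern w [1,2,3]"
    unfolding contains_pattern_def
    by (intro exI[of _ "[i, j, k]"]) (auto simp: less_Suc_eq numeral_3_eq_3)
qed

definition has_ascent_above :: "nat \<Rightarrow> nat list \<Rightarrow> bool" where
  "has_ascent_above a u \<longleftrightarrow> (\<exists>j k. j < k \<and> k < length u \<and> a < u ! j \<and> u ! j < u ! k)"

lemma has_increasing_triple_Cons:
  "has_increasing_triple (x # u) \<longleftrightarrow> has_increasing_triple u \<or> has_ascent_above x u"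
proof
  assume "has_increasing_triple (x # u)"
  then obtain i j k where ijk: "i < j" "j < k" "k < Suc (length u)"
      "(x # u) ! i < (x # u) ! j" "(x # u) ! j < (x # u) ! k"
    unfolding has_increasing_triple_def by auto
  then obtain j' k' where "j = Suc j'" "k = Suc k'"
    by (cases j; cases k) auto
  with ijk show "has_increasing_triple u \<or> has_ascent_above x u"
    unfolding has_increasing_triple_def has_ascent_above_def
    by (cases i) auto
next
  assume "has_increasing_triple u \<or> has_ascent_above x u"
  then show "has_increasing_triple (x # u)"
  proof
    assume "has_increasing_triple u"
    then obtain i j k where "i < j" "j < k" "k < length u" "u ! i < u ! j" "u ! j < u ! k"
      unfolding has_increasing_triple_def by blast
    then show ?thesis
      unfolding has_increasing_triple_def
      by (intro exI[of _ "Suc i"] exI[of _ "Suc j"] exI[of _ "Suc k"]) auto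
  next
    assume "has_ascent_above x u"
    then obtain j k where "j < k" "k < length u" "x < u ! j" "u ! j < u ! k"
      unfolding has_ascent_above_def by blast
    then show ?thesis
      unfolding has_increasing_triple_def
      by (intro exI[of _ 0] exI[of _ "Suc j"] exI[of _ "Suc k"]) auto
  qed
qed

lemma has_ascent_above_Cons:
  "has_ascent_above a (x # u) \<longleftrightarrow> has_ascent_above a u \<or> (a < x \<and> (\<exists>y\<in>set u. x < y))"
proof
  assume "has_ascent_above a (x # u)"
  then obtain j k where jk: "j < k" "k < Suc (length u)"
      "a < (x # u) ! j" "(x # u) ! j < (x # u) ! k"
    unfolding has_ascent_above_def by auto
  then obtain k' where "k = Suc k'"
    by (cases k) auto
  with jk show "has_ascent_above a u \<or> (a < x \<and> (\<exists>y\<in>set u. x < y))"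
    unfolding has_ascent_above_def by (cases j) auto
next
  assume "has_ascent_above a u \<or> (a < x \<and> (\<exists>y\<in>set u. x < y))"
  then show "has_ascent_above a (x # u)"
  proof
    assume "has_ascent_above a u"
    then obtain j k where "j < k" "k < length u" "a < u ! j" "u ! j < u ! k"
      unfolding has_ascent_above_def by blast
    then show ?thesis
      unfolding has_ascent_above_def by (intro exI[of _ "Suc j"] exI[of _ "Suc k"]) auto
  next
    assume "a < x \<and> (\<exists>y\<in>set u. x < y)"
    then obtain k where "a < x" "k < length u" "x < u ! k"
      by (auto simp: in_set_conv_nth)
    then show ?thesis
      unfolding has_ascent_above_def by (intro exI[of _ 0] exI[of _ "Suc k"]) auto
  qed
qed

lemma not_has_ascent_above_iff:
  "\<not> has_ascent_above a u \<longleftrightarrow> sorted (rev (filter ((<) a) u))"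
proof (induction u)
  case Nil
  then show ?case by (simp add: has_ascent_above_def)
next
  case (Cons x u)
  then show ?case by (auto simp: has_ascent_above_Cons sorted_append not_less)
qed

definition clamp :: "nat \<Rightarrow> nat \<Rightarrow> nat" where
  "clamp a x = (if a < x then Suc a else x)"

lemma clamp_le: "clamp a x \<le> Suc a"
  by (simp add: clamp_def)

lemma clamp_eq_self: "x \<le> a \<Longrightarrow> clamp a x = x"
  by (simp add: clamp_def)

lemma clamp_Suc_Suc: "clamp (Suc a) (Suc x) = Suc (clamp a x)"
  by (simp add: clamp_def)

lemma has_increasing_triple_map_clamp:
  assumes "\<not> has_ascent_above a u"
  shows "has_increasing_triple (map (clamp a) u) \<longleftrightarrow> has_increasing_triple u"
proof
  assume "has_increasing_triple (map (clamp a) u)"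
  then obtain i j k where "i < j" "j < k" "k < length u"
      "clamp a (u ! i) < clamp a (u ! j)" "clamp a (u ! j) < clamp a (u ! k)"
    unfolding has_increasing_triple_def by auto
  moreover from this have "u ! i < u ! j" "u ! j < u ! k"
    unfolding clamp_def by (auto split: if_splits)
  ultimately show "has_increasing_triple u"
    unfolding has_increasing_triple_def by blast
next
  assume "has_increasing_triple u"
  then obtain i j k where ijk: "i < j" "j < k" "k < length u" "u ! i < u ! j" "u ! j < u ! k"
    unfolding has_increasing_triple_def by blast
  with assms have "\<not> a < u ! j"
    unfolding has_ascent_above_def by auto
  with ijk show "has_increasing_triple (map (clamp a) u)"
    unfolding has_increasing_triple_def clamp_def by (intro exI[of _ i] exI[of _ j] exI[of _ k]) auto
qed

fun unclamp :: "nat \<Rightarrow> nat list \<Rightarrow> nat list \<Rightarrow> nat list" where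
  "unclamp a bs [] = []"
| "unclamp a bs (x # xs) =
     (if x = Suc a then hd bs # unclamp a (tl bs) xs else x # unclamp a bs xs)"

lemma unclamp_map_clamp: "unclamp a (filter ((<) a) u) (map (clamp a) u) = u"
  by (induction u) (auto simp: clamp_def)

lemma map_clamp_unclamp:
  assumes "\<forall>x\<in>set v. x \<le> Suc a" "\<forall>b\<in>set bs. a < b" "length bs = count_list v (Suc a)"
  shows "map (clamp a) (unclamp a bs v) = v \<and> filter ((<) a) (unclamp a bs v) = bs"
  using assms
proof (induction v arbitrary: bs)
  case Nil
  then show ?case by simp
next
  case (Cons x v)
  show ?case
  proof (cases "x = Suc a")
    case True
    with Cons.prems obtain b bs' where "bs = b # bs'"
      by (cases bs) auto
    with Cons True show ?thesis by (simp add: clamp_def)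
  next
    case False
    with Cons show ?thesis by (simp add: clamp_def)
  qed
qed

lemma filter_not_above_image_clamp:
  "filter_mset (\<lambda>x. \<not> a < x) (image_mset (clamp a) M) = filter_mset (\<lambda>x. \<not> a < x) M"
  by (induction M) (simp_all add: clamp_def)

lemma count_image_clamp:
  "count (image_mset (clamp a) M) (Suc a) = size (filter_mset ((<) a) M)"
  by (induction M) (simp_all add: clamp_def)

lemma sorted_rev_mset_eq:
  assumes "mset xs = mset ys" "sorted (rev xs)" "sorted (rev ys)"
  shows "xs = ys"
proof -
  have "sort (rev ys) = rev xs"
    using assms by (intro properties_for_sort) simp_all
  moreover have "sort (rev ys) = rev ys"
    using assms(3) by (rule sorted_sort_id)
  ultimately show ?thesis by simp
qed

lemma bij_betw_map_clamp:
  "bij_betw (map (clamp a))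
     {u \<in> permutations_of_multiset M. \<not> has_increasing_triple (a # u)}
     {v \<in> permutations_of_multiset (image_mset (clamp a) M). \<not> has_increasing_triple v}"
  (is "bij_betw _ ?U ?V")
proof -
  have no_ascent: "\<not> has_ascent_above a u"
    and no_triple: "\<not> has_increasing_triple u"
    and big_letters: "mset (filter ((<) a) u) = filter_mset ((<) a) M" if "u \<in> ?U" for u
    using that has_increasing_triple_Cons[of a u] by (auto simp: permutations_of_multiset_def)
  have "map (clamp a) u \<in> ?V" if "u \<in> ?U" for u
    using that no_ascent[OF that] no_triple[OF that]
    by (simp add: has_increasing_triple_map_clamp permutations_of_multiset_def)
  then have "map (clamp a) ` ?U \<subseteq> ?V"
    by blast
  moreover have "inj_on (map (clamp a)) ?U"
  proof (rule inj_onI)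
    fix u u' assume "u \<in> ?U" "u' \<in> ?U" and clamped: "map (clamp a) u = map (clamp a) u'"
    then have "filter ((<) a) u = filter ((<) a) u'"
      using no_ascent big_letters not_has_ascent_above_iff by (metis sorted_rev_mset_eq)
    with clamped show "u = u'"
      by (metis unclamp_map_clamp)
  qed
  moreover have "?V \<subseteq> map (clamp a) ` ?U"
  proof
    fix v assume "v \<in> ?V"
    then have v_mset: "mset v = image_mset (clamp a) M" and v_avoids: "\<not> has_increasing_triple v"
      by (auto simp: permutations_of_multiset_def)
    define bs where "bs = rev (sorted_list_of_multiset (filter_mset ((<) a) M))"
    define u where "u = unclamp a bs v"
    have "set v = clamp a ` set_mset M"
      using v_mset by (metis set_image_mset set_mset_mset)
    then have v_small: "\<forall>x\<in>set v. x \<le> Suc a"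
      using clamp_le by auto
    have bs_big: "\<forall>b\<in>set bs. a < b"
      unfolding bs_def by auto
    have "length bs = size (filter_mset ((<) a) M)"
      unfolding bs_def by (metis length_rev mset_sorted_list_of_multiset size_mset)
    also have "\<dots> = count_list v (Suc a)"
      by (simp add: v_mset count_image_clamp flip: count_mset)
    finally have "map (clamp a) u = v \<and> filter ((<) a) u = bs"
      unfolding u_def using map_clamp_unclamp v_small bs_big by blast
    then have u_clamped: "map (clamp a) u = v" and u_big: "filter ((<) a) u = bs"
      by auto
    have "mset u = filter_mset ((<) a) (mset u) + filter_mset (\<lambda>x. \<not> a < x) (mset u)"
      by (rule multiset_partition)
    also have "\<dots> = filter_mset ((<) a) M + filter_mset (\<lambda>x. \<not> a < x) M"
      using u_big u_clamped v_mset filter_not_above_image_clamp[of a]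
      by (metis bs_def mset_filter mset_map mset_rev mset_sorted_list_of_multiset)
    finally have "mset u = M"
      by (simp flip: multiset_partition)
    moreover have "\<not> has_ascent_above a u"
      unfolding not_has_ascent_above_iff u_big bs_def by simp
    moreover from this have "\<not> has_increasing_triple u"
      using has_increasing_triple_map_clamp u_clamped v_avoids by blast
    ultimately have "u \<in> ?U"
      by (simp add: has_increasing_triple_Cons permutations_of_multiset_def)
    then have "map (clamp a) u \<in> map (clamp a) ` ?U"
      by (rule imageI)
    with u_clamped show "v \<in> map (clamp a) ` ?U"
      by simp
  qed
  ultimately show ?thesis
    unfolding bij_betw_def by blast
qed

fun content_mset :: "nat list \<Rightarrow> nat multiset" where
  "content_mset [] = {#}"
| "content_mset (l # L) = replicate_mset l 1 + image_mset Suc (content_mset L)"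

lemma count_image_mset_Suc:
  "count (image_mset Suc M) j = (case j of 0 \<Rightarrow> 0 | Suc n \<Rightarrow> count M n)"
  by (induction M) (auto split: nat.split)

lemma count_content_mset:
  "count (content_mset L) j = (if 1 \<le> j \<and> j \<le> length L then L ! (j - 1) else 0)"
proof (induction L arbitrary: j)
  case Nil
  then show ?case by simp
next
  case (Cons l L)
  then show ?case
    by (auto simp: count_image_mset_Suc nth_Cons' split: nat.split)
qed

lemma size_content_mset: "size (content_mset L) = sum_list L"
  by (induction L) auto

lemma words_with_content_eq_permutations:
  "words_with_content L = permutations_of_multiset (content_mset L)"
proof (intro set_eqI iffI)
  fix w assume "w \<in> words_with_content L"
  then have "set w \<subseteq> {1..length L}" "\<forall>j\<in>{1..length L}. count_list w j = L ! (j - 1)"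
    unfolding words_with_content_def by auto
  then have "count (mset w) j = count (content_mset L) j" for j
    by (cases "j \<in> {1..length L}") (auto simp: count_content_mset count_mset count_list_0_iff)
  then show "w \<in> permutations_of_multiset (content_mset L)"
    by (simp add: permutations_of_multiset_def multiset_eq_iff)
next
  fix w assume "w \<in> permutations_of_multiset (content_mset L)"
  then have counts: "count_list w j = count (content_mset L) j" for j
    by (simp add: permutations_of_multiset_def flip: count_mset)
  have "set w \<subseteq> {1..length L}"
  proof
    fix x assume "x \<in> set w"
    then have "count (content_mset L) x \<noteq> 0"
      by (simp flip: counts add: count_list_0_iff)
    then show "x \<in> {1..length L}"
      by (auto simp: count_content_mset split: if_splits)
  qed
  with counts show "w \<in> words_with_content L"
    unfolding words_with_content_def by (simp add: count_content_mset)
qed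

lemma image_clamp_content_mset:
  assumes "i < length L" "1 \<le> L ! i"
  shows "image_mset (clamp (Suc i)) (content_mset L - {#Suc i#})
         = content_mset (take i L @ [L ! i - 1, sum_list (drop (Suc i) L)])"
  using assms
proof (induction L arbitrary: i)
  case Nil
  then show ?case by simp
next
  case (Cons l L)
  show ?case
  proof (cases i)
    case 0
    with Cons.prems have "content_mset (l # L) - {#Suc i#}
        = replicate_mset (l - 1) 1 + image_mset Suc (content_mset L)"
      by (cases l) auto
    moreover have "clamp 1 (Suc x) = 2" if "x \<in># content_mset L" for x
      using that
      by (auto simp: clamp_def count_content_mset split: if_splits simp flip: count_greater_zero_iff)
    then have "{#clamp 1 (Suc x). x \<in># content_mset L#} = replicate_mset (sum_list L) 2"
      using image_mset_cong[of "content_mset L" "\<lambda>x. clamp 1 (Suc x)" "\<lambda>_. 2"]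
      by (simp add: image_mset_const_eq size_content_mset)
    ultimately show ?thesis
      using 0 by (simp add: image_mset.compositionality comp_def clamp_eq_self numeral_2_eq_2)
  next
    case (Suc k)
    with Cons.prems have k: "k < length L" "1 \<le> L ! k"
      by auto
    then have "{#Suc k#} \<subseteq># content_mset L"
      by (simp add: count_content_mset flip: count_greater_zero_iff)
    then have "content_mset (l # L) - {#Suc i#}
        = replicate_mset l 1 + image_mset Suc (content_mset L - {#Suc k#})"
      using Suc by (simp add: image_mset_Diff)
    moreover have "image_mset (clamp (Suc i)) (image_mset Suc X)
        = image_mset Suc (image_mset (clamp i) X)" for X
      by (simp add: image_mset.compositionality comp_def clamp_Suc_Suc)
    ultimately show ?thesis
      using Suc Cons.IH[OF k] by (simp add: clamp_eq_self)
  qed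
qed

lemma set_mset_content_mset:
  "set_mset (content_mset L) = Suc ` {i. i < length L \<and> 1 \<le> L ! i}"
proof (intro set_eqI iffI)
  fix x assume "x \<in># content_mset L"
  then show "x \<in> Suc ` {i. i < length L \<and> 1 \<le> L ! i}"
    by (cases x)
      (auto simp: count_content_mset simp flip: count_greater_zero_iff split: if_splits)
qed (auto simp: count_content_mset simp flip: count_greater_zero_iff)

lemma A_eq_card_permutations:
  "A L = card {w \<in> permutations_of_multiset (content_mset L). \<not> has_increasing_triple w}"
  unfolding A_def avoids_pattern_def contains_pattern_123_iff words_with_content_eq_permutations ..

lemma card_permutations_of_multiset_by_head:
  assumes "M \<noteq> {#}"
  shows "card {w \<in> permutations_of_multiset M. P w}
       = (\<Sum>a\<in>set_mset M. card {u \<in> permutations_of_multiset (M - {#a#}). P (a # u)})"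
proof -
  let ?U = "\<lambda>a. {u \<in> permutations_of_multiset (M - {#a#}). P (a # u)}"
  have "{w \<in> permutations_of_multiset M. P w} = (\<Union>a\<in>set_mset M. (#) a ` ?U a)"
  proof (intro set_eqI iffI)
    fix w assume w: "w \<in> {w \<in> permutations_of_multiset M. P w}"
    with assms obtain a u where "w = a # u"
      by (cases w) (auto simp: permutations_of_multiset_def)
    with w show "w \<in> (\<Union>a\<in>set_mset M. (#) a ` ?U a)"
      by (auto simp: permutations_of_multiset_Cons_iff)
  qed (auto simp: permutations_of_multiset_Cons_iff)
  also have "card \<dots> = (\<Sum>a\<in>set_mset M. card ((#) a ` ?U a))"
    by (rule card_UN_disjoint) auto
  also have "\<dots> = (\<Sum>a\<in>set_mset M. card (?U a))"
    by (intro sum.cong refl card_image) simp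
  finally show ?thesis .
qed

theorem theorem1:
  fixes L :: "nat list"
  assumes "sum_list L \<ge> 1"
  shows "A L = (\<Sum>i\<in>{i. i < length L \<and> L ! i \<ge> 1}.
                  A (take i L @ [L ! i - 1, sum_list (drop (Suc i) L)]))"
proof -
  let ?M = "content_mset L"
  let ?I = "{i. i < length L \<and> L ! i \<ge> 1}"
  let ?avoiders = "\<lambda>M. {w \<in> permutations_of_multiset M. \<not> has_increasing_triple w}"
  let ?headed = "\<lambda>a. {u \<in> permutations_of_multiset (?M - {#a#}).
                          \<not> has_increasing_triple (a # u)}"
  have "?M \<noteq> {#}"
    using assms by (metis size_content_mset size_empty not_one_le_zero)
  then have "A L = (\<Sum>a\<in>Suc ` ?I. card (?headed a))"
    by (simp add: A_eq_card_permutations card_permutations_of_multiset_by_head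
        set_mset_content_mset)
  also have "\<dots> = (\<Sum>i\<in>?I. card (?headed (Suc i)))"
    by (simp add: sum.reindex)
  also have "\<dots> = (\<Sum>i\<in>?I. card (?avoiders (image_mset (clamp (Suc i)) (?M - {#Suc i#}))))"
    by (intro sum.cong refl bij_betw_same_card[OF bij_betw_map_clamp])
  also have "\<dots> = (\<Sum>i\<in>?I. A (take i L @ [L ! i - 1, sum_list (drop (Suc i) L)]))"
    by (intro sum.cong refl) (simp add: image_clamp_content_mset A_eq_card_permutations)
  finally show ?thesis .
qed

end
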